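(* Let $\mu,\epsilon,\delta>0$ and let $f:\mathbb{R}^d\to\mathbb{R}$ be differentiable, $\mu$-strongly convex, with $(1/\epsilon)$-Lipschitz gradient and minimizer $x^\ast$. Let $(A_k)_{k\ge0}$ be a nondecreasing sequence of positive numbers, $\tau_k=(A_{k+1}-A_k)/A_{k+1}$, and $E_k=A_k\big(\frac\mu2\|x^\ast-z_k\|^2+f(y_k)-f(x^\ast)\big)$. Suppose that for all $k$ $$x_k=\frac{\tau_k}{1+\tau_k}z_k+\frac1{1+\tau_k}y_k,\qquad z_{k+1}-z_k=\tau_k\Big(x_k-z_k-\frac1\mu\nabla f(x_k)\Big),\qquad y_{k+1}=x_k-\epsilon\nabla f(x_k).$$ Then $$\frac{E_{k+1}-E_k}{\delta}\le\frac{A_{k+1}}{\delta}\Big(\frac{\tau_k^2}{2\mu}-\frac\epsilon2\Big)\|\nabla f(x_k)\|^2+\frac{A_{k+1}}{\delta}\Big(\frac{\tau_k}{2\epsilon}-\frac{\mu}{2\tau_k}\Big)\|x_k-y_k\|^2.$$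
   Context: $\|\cdot\|$ is the Euclidean norm; $\mu$-strong convexity means $f(y)\ge f(x)+\langle\nabla f(x),y-x\rangle+\frac\mu2\|y-x\|^2$. *)

theory Defs
  imports "HOL-Analysis.Analysis"
begin

definition strongly_convex_with :: "real \<Rightarrow> ('a::real_inner \<Rightarrow> real) \<Rightarrow> ('a \<Rightarrow> 'a) \<Rightarrow> bool" where
  "strongly_convex_with \<mu> f g \<longleftrightarrow>
     (\<forall>x y. f y \<ge> f x + inner (g x) (y - x) + \<mu> / 2 * (norm (y - x))\<^sup>2)"

end

theory Submission
  imports Defs
begin

text \<open>With \<open>\<tau> = \<tau>\<^sub>k\<close>, \<open>u = x\<^sub>k - z\<^sub>k\<close> and \<open>G = \<nabla>f(x\<^sub>k)\<close>, the coupling gives \<open>y\<^sub>k = x\<^sub>k + \<tau> u\<close> and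
  \<open>A\<^sub>k = (1 - \<tau>) A\<^sub>k\<^sub>+\<^sub>1\<close>. Strong convexity at \<open>x\<^sub>k\<close>, evaluated at \<open>x\<^sup>*\<close> and at \<open>y\<^sub>k\<close> with weights
  \<open>\<tau>\<close> and \<open>1 - \<tau>\<close>, together with the descent lemma for the gradient step, bounds
  \<open>(E\<^sub>k\<^sub>+\<^sub>1 - E\<^sub>k) / A\<^sub>k\<^sub>+\<^sub>1\<close> by a quadratic expression in which all inner products with
  \<open>x\<^sup>* - x\<^sub>k\<close> cancel, leaving \<open>(\<tau>\<^sup>2/(2\<mu>) - \<epsilon>/2)\<parallel>G\<parallel>\<^sup>2 - \<mu>\<tau>(1 - \<tau>\<^sup>2)/2 \<parallel>u\<parallel>\<^sup>2\<close>. Finally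
  \<open>\<mu> \<le> 1/\<epsilon>\<close>, as strong convexity and smoothness bound \<open>f\<close> from both sides.\<close>

lemma lipschitz_gradient_upper_bound:
  fixes f :: "'a::real_inner \<Rightarrow> real" and g :: "'a \<Rightarrow> 'a"
  assumes grad: "\<And>u. (f has_derivative (\<lambda>h. inner (g u) h)) (at u)"
    and lip: "\<And>u v. norm (g u - g v) \<le> L * norm (u - v)"
  shows "f (X + h) \<le> f X + inner (g X) h + L / 2 * (norm h)\<^sup>2"
proof -
  define \<psi> where "\<psi> s = f (X + s *\<^sub>R h) - s * inner (g X) h - L / 2 * s\<^sup>2 * (norm h)\<^sup>2" for s
  have \<psi>_deriv: "DERIV \<psi> s :> inner (g (X + s *\<^sub>R h)) h - inner (g X) h - L * s * (norm h)\<^sup>2" for s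
  proof -
    have "((\<lambda>s. X + s *\<^sub>R h) has_derivative (\<lambda>d. d *\<^sub>R h)) (at s)"
      by (auto intro!: derivative_eq_intros)
    from has_derivative_compose[OF this grad]
    have "((\<lambda>s. f (X + s *\<^sub>R h)) has_derivative (\<lambda>d. d * inner (g (X + s *\<^sub>R h)) h)) (at s)"
      by simp
    hence "DERIV (\<lambda>s. f (X + s *\<^sub>R h)) s :> inner (g (X + s *\<^sub>R h)) h"
      unfolding has_field_derivative_def by (subst mult.commute[abs_def]) simp
    then show ?thesis unfolding \<psi>_def
      by (auto intro!: derivative_eq_intros simp: power2_eq_square algebra_simps)
  qed
  have \<psi>_deriv_nonpos: "inner (g (X + s *\<^sub>R h)) h - inner (g X) h - L * s * (norm h)\<^sup>2 \<le> 0"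
    if "0 \<le> s" for s
  proof -
    have "inner (g (X + s *\<^sub>R h)) h - inner (g X) h = inner (g (X + s *\<^sub>R h) - g X) h"
      by (simp add: inner_diff_left)
    also have "\<dots> \<le> norm (g (X + s *\<^sub>R h) - g X) * norm h" by (rule norm_cauchy_schwarz)
    also have "\<dots> \<le> L * norm (s *\<^sub>R h) * norm h"
      using lip[of "X + s *\<^sub>R h" X] by (simp add: mult_right_mono)
    also have "\<dots> = L * s * (norm h)\<^sup>2" using that by (simp add: power2_eq_square)
    finally show ?thesis by simp
  qed
  have "\<psi> 1 \<le> \<psi> 0"
    by (rule DERIV_nonpos_imp_nonincreasing[of 0 1 \<psi>])
      (use \<psi>_deriv \<psi>_deriv_nonpos in \<open>auto intro!: exI\<close>)
  then show ?thesis unfolding \<psi>_def by simp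
qed

lemma gradient_step_decrease:
  fixes f :: "'a::real_inner \<Rightarrow> real" and g :: "'a \<Rightarrow> 'a"
  assumes "\<epsilon> > 0"
    and grad: "\<And>u. (f has_derivative (\<lambda>h. inner (g u) h)) (at u)"
    and lip: "\<And>u v. norm (g u - g v) \<le> (1 / \<epsilon>) * norm (u - v)"
  shows "f (X - \<epsilon> *\<^sub>R g X) \<le> f X - \<epsilon> / 2 * (norm (g X))\<^sup>2"
proof -
  have "f (X + (- \<epsilon>) *\<^sub>R g X)
      \<le> f X + inner (g X) ((- \<epsilon>) *\<^sub>R g X) + (1 / \<epsilon>) / 2 * (norm ((- \<epsilon>) *\<^sub>R g X))\<^sup>2"
    by (rule lipschitz_gradient_upper_bound[OF grad lip])
  also have "\<dots> = f X - \<epsilon> / 2 * (norm (g X))\<^sup>2"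
    using \<open>\<epsilon> > 0\<close>
    by (simp add: power2_eq_square power2_norm_eq_inner[symmetric] field_simps)
  finally show ?thesis by simp
qed

lemma strong_convexity_le_lipschitz_constant:
  fixes f :: "'a::euclidean_space \<Rightarrow> real" and g :: "'a \<Rightarrow> 'a"
  assumes grad: "\<And>u. (f has_derivative (\<lambda>h. inner (g u) h)) (at u)"
    and lip: "\<And>u v. norm (g u - g v) \<le> L * norm (u - v)"
    and sconv: "strongly_convex_with \<mu> f g"
  shows "\<mu> \<le> L"
proof -
  obtain b :: 'a where b: "b \<in> Basis" using nonempty_Basis by blast
  have "f (0 + b) \<le> f 0 + inner (g 0) b + L / 2 * (norm b)\<^sup>2"
    by (rule lipschitz_gradient_upper_bound[OF grad lip])
  moreover have "f b \<ge> f 0 + inner (g 0) (b - 0) + \<mu> / 2 * (norm (b - 0))\<^sup>2"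
    using sconv unfolding strongly_convex_with_def by blast
  ultimately show ?thesis using b by simp
qed

text \<open>The point \<open>p\<close> is arbitrary.\<close>

lemma strongly_convex_lyapunov_step:
  fixes f :: "'a::real_inner \<Rightarrow> real" and g :: "'a \<Rightarrow> 'a"
  assumes sconv: "strongly_convex_with \<mu> f g" and "\<mu> > 0" and "0 \<le> t" "t \<le> 1"
    and Y: "Y = X + t *\<^sub>R (X - Z)"
    and Z': "Z' = Z + t *\<^sub>R (X - Z - (1 / \<mu>) *\<^sub>R g X)"
    and Y': "f Y' \<le> f X - \<epsilon> / 2 * (norm (g X))\<^sup>2"
  shows "\<mu> / 2 * (norm (p - Z'))\<^sup>2 + f Y' - f p - (1 - t) * (\<mu> / 2 * (norm (p - Z))\<^sup>2 + f Y - f p)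
    \<le> (t\<^sup>2 / (2 * \<mu>) - \<epsilon> / 2) * (norm (g X))\<^sup>2 + (\<mu> * t ^ 3 / 2 - \<mu> * t / 2) * (norm (X - Z))\<^sup>2"
proof -
  define G where "G = g X"
  define u where "u = X - Z"
  define B where "B = p - X"
  have sc: "f b \<ge> f a + inner (g a) (b - a) + \<mu> / 2 * (norm (b - a))\<^sup>2" for a b
    using sconv by (simp add: strongly_convex_with_def)
  have at_p: "t * (f X - f p) \<le> t * (- inner G B - \<mu> / 2 * (norm B)\<^sup>2)"
    using sc[of X p] \<open>0 \<le> t\<close> by (intro mult_left_mono) (auto simp: G_def B_def)
  have at_Y: "(1 - t) * (f X - f Y) \<le> (1 - t) * (- t * inner G u - \<mu> / 2 * t\<^sup>2 * (norm u)\<^sup>2)"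
    using sc[of X Y] \<open>t \<le> 1\<close>
    by (intro mult_left_mono) (auto simp: G_def u_def Y power_mult_distrib)
  have norm_sum3: "(norm (a + b + c))\<^sup>2
      = (norm a)\<^sup>2 + (norm b)\<^sup>2 + (norm c)\<^sup>2 + 2 * inner a b + 2 * inner c a + 2 * inner b c"
    for a b c :: 'a
    by (simp add: power2_norm_eq_inner inner_add_left inner_add_right inner_commute)
  have "p - Z' = B + (1 - t) *\<^sub>R u + (t / \<mu>) *\<^sub>R G"
    by (simp add: Z' B_def u_def G_def algebra_simps)
  then have norm_Z': "(norm (p - Z'))\<^sup>2 = (norm B)\<^sup>2 + (1 - t)\<^sup>2 * (norm u)\<^sup>2 + (t / \<mu>)\<^sup>2 * (norm G)\<^sup>2
      + 2 * (1 - t) * inner B u + 2 * (t / \<mu>) * inner G B + 2 * (1 - t) * (t / \<mu>) * inner G u"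
    using norm_sum3[of B "(1 - t) *\<^sub>R u" "(t / \<mu>) *\<^sub>R G"]
    by (simp add: power_mult_distrib inner_commute power_divide mult.assoc) (simp add: algebra_simps)
  have norm_Z: "(norm (p - Z))\<^sup>2 = (norm B)\<^sup>2 + 2 * inner B u + (norm u)\<^sup>2"
    by (simp add: B_def u_def power2_norm_eq_inner inner_add_left inner_add_right
        inner_diff_left inner_diff_right inner_commute algebra_simps)
  have "\<mu> / 2 * (norm (p - Z'))\<^sup>2 - (1 - t) * (\<mu> / 2 * (norm (p - Z))\<^sup>2)
      - \<epsilon> / 2 * (norm G)\<^sup>2 + t * (- inner G B - \<mu> / 2 * (norm B)\<^sup>2)
      + (1 - t) * (- t * inner G u - \<mu> / 2 * t\<^sup>2 * (norm u)\<^sup>2)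
      = (t\<^sup>2 / (2 * \<mu>) - \<epsilon> / 2) * (norm G)\<^sup>2 + (\<mu> * t ^ 3 / 2 - \<mu> * t / 2) * (norm u)\<^sup>2"
    unfolding norm_Z' norm_Z using \<open>\<mu> > 0\<close>
    by (simp add: field_simps power2_eq_square power3_eq_cube inner_commute)
  moreover have "\<mu> / 2 * (norm (p - Z'))\<^sup>2 + f Y' - f p - (1 - t) * (\<mu> / 2 * (norm (p - Z))\<^sup>2 + f Y - f p)
      = \<mu> / 2 * (norm (p - Z'))\<^sup>2 - (1 - t) * (\<mu> / 2 * (norm (p - Z))\<^sup>2)
        + (f Y' - f X) + t * (f X - f p) + (1 - t) * (f X - f Y)"
    by (simp add: algebra_simps)
  ultimately show ?thesis
    unfolding G_def[symmetric] u_def[symmetric] using at_p at_Y Y'[folded G_def] by linarith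
qed

lemma coefficient_bound_of_mu_le_inverse_eps:
  fixes \<mu> \<epsilon> t r :: real
  assumes "\<mu> \<le> 1 / \<epsilon>" "\<epsilon> > 0" "t \<ge> 0"
  shows "(\<mu> * t ^ 3 / 2 - \<mu> * t / 2) * r\<^sup>2 \<le> (t / (2 * \<epsilon>) - \<mu> / (2 * t)) * (t\<^sup>2 * r\<^sup>2)"
proof (cases "t = 0")
  case False
  with assms have "\<mu> * t ^ 3 / 2 \<le> t ^ 3 / (2 * \<epsilon>)"
    by (simp add: field_simps mult_left_mono)
  then have "(\<mu> * t ^ 3 / 2 - \<mu> * t / 2) * r\<^sup>2 \<le> (t ^ 3 / (2 * \<epsilon>) - \<mu> * t / 2) * r\<^sup>2"
    by (intro mult_right_mono) auto
  also have "\<dots> = (t / (2 * \<epsilon>) - \<mu> / (2 * t)) * (t\<^sup>2 * r\<^sup>2)"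
    using False \<open>\<epsilon> > 0\<close> by (simp add: field_simps power2_eq_square power3_eq_cube)
  finally show ?thesis .
qed simp

theorem corollary1:
  fixes f :: "'a::euclidean_space \<Rightarrow> real" and g :: "'a \<Rightarrow> 'a"
    and \<mu> \<epsilon> \<delta> :: real and xstar :: 'a
    and A :: "nat \<Rightarrow> real" and x y z :: "nat \<Rightarrow> 'a" and k :: nat
  assumes pos: "\<mu> > 0" "\<epsilon> > 0" "\<delta> > 0"
    and grad: "\<And>u. (f has_derivative (\<lambda>h. inner (g u) h)) (at u)"
    and sconv: "strongly_convex_with \<mu> f g"
    and lip: "\<And>u v. norm (g u - g v) \<le> (1 / \<epsilon>) * norm (u - v)"
    and minim: "\<And>u. f xstar \<le> f u"
    and Apos: "\<And>n. A n > 0"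
    and Amono: "mono A"
    and xdef: "\<And>n. x n = (((A (Suc n) - A n) / A (Suc n)) / (1 + (A (Suc n) - A n) / A (Suc n))) *\<^sub>R z n
                      + (1 / (1 + (A (Suc n) - A n) / A (Suc n))) *\<^sub>R y n"
    and zstep: "\<And>n. z (Suc n) - z n = ((A (Suc n) - A n) / A (Suc n)) *\<^sub>R (x n - z n - (1 / \<mu>) *\<^sub>R g (x n))"
    and ystep: "\<And>n. y (Suc n) = x n - \<epsilon> *\<^sub>R g (x n)"
  shows "(let \<tau> = (\<lambda>n. (A (Suc n) - A n) / A (Suc n));
              E = (\<lambda>n. A n * (\<mu> / 2 * (norm (xstar - z n))\<^sup>2 + f (y n) - f xstar))
          in (E (Suc k) - E k) / \<delta>
             \<le> A (Suc k) / \<delta> * ((\<tau> k)\<^sup>2 / (2 * \<mu>) - \<epsilon> / 2) * (norm (g (x k)))\<^sup>2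
               + A (Suc k) / \<delta> * (\<tau> k / (2 * \<epsilon>) - \<mu> / (2 * \<tau> k)) * (norm (x k - y k))\<^sup>2)"
proof -
  define t where "t = (A (Suc k) - A k) / A (Suc k)"
  have "A k \<le> A (Suc k)" using Amono by (simp add: mono_def)
  with Apos[of k] Apos[of "Suc k"] have "0 \<le> t" "t \<le> 1" and A_k: "A k = (1 - t) * A (Suc k)"
    by (simp_all add: t_def field_simps)
  have "(1 + t) *\<^sub>R x k = t *\<^sub>R z k + y k"
    using xdef[of k] \<open>0 \<le> t\<close> by (simp add: t_def[symmetric] scaleR_add_right)
  then have y_k: "y k = x k + t *\<^sub>R (x k - z k)"
    by (simp add: algebra_simps)
  have z_next: "z (Suc k) = z k + t *\<^sub>R (x k - z k - (1 / \<mu>) *\<^sub>R g (x k))"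
    using zstep[of k] by (simp add: t_def algebra_simps)
  have norm_xy: "(norm (x k - y k))\<^sup>2 = t\<^sup>2 * (norm (x k - z k))\<^sup>2"
    by (simp add: y_k power_mult_distrib)
  from strongly_convex_lyapunov_step[OF sconv pos(1) \<open>0 \<le> t\<close> \<open>t \<le> 1\<close> y_k z_next
      gradient_step_decrease[OF pos(2) grad lip, of "x k", folded ystep], where p = xstar]
    coefficient_bound_of_mu_le_inverse_eps[OF strong_convexity_le_lipschitz_constant[OF grad lip sconv]
      pos(2) \<open>0 \<le> t\<close>, of "norm (x k - z k)"]
  have "\<mu> / 2 * (norm (xstar - z (Suc k)))\<^sup>2 + f (y (Suc k)) - f xstar
      - (1 - t) * (\<mu> / 2 * (norm (xstar - z k))\<^sup>2 + f (y k) - f xstar)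
    \<le> (t\<^sup>2 / (2 * \<mu>) - \<epsilon> / 2) * (norm (g (x k)))\<^sup>2 + (t / (2 * \<epsilon>) - \<mu> / (2 * t)) * (norm (x k - y k))\<^sup>2"
    (is "?E' - (1 - t) * ?E \<le> ?a * ?G + ?b * ?N")
    unfolding norm_xy by linarith
  then have "A (Suc k) / \<delta> * (?E' - (1 - t) * ?E) \<le> A (Suc k) / \<delta> * (?a * ?G + ?b * ?N)"
    using Apos[of "Suc k"] pos(3) by (intro mult_left_mono) auto
  moreover have "A (Suc k) / \<delta> * (?E' - (1 - t) * ?E) = (A (Suc k) * ?E' - A k * ?E) / \<delta>"
    unfolding A_k using pos(3) by (simp add: field_simps)
  ultimately show ?thesis
    unfolding Let_def t_def[symmetric] by (simp add: algebra_simps)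
qed

end
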